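(* Suppose that $n_1,n_2$ are integers with $n_2\ge n_1\ge 34$. Then $$\frac{n_1}{n_1+n_2}\log\log(n_2)\le\frac12\log\log(n_1).$$
   Context: $\log$ denotes the natural logarithm. *)

theory Defs
  imports Complex_Main
begin

end

theory Submission
  imports Defs
begin

text \<open>Put \<open>x = n\<^sub>1\<close>, \<open>y = n\<^sub>2\<close>. The claim is equivalent to
  \<open>2x (ln ln y - ln ln x) \<le> (y - x) ln ln x\<close>. Concavity of \<open>ln\<close>, applied twice, bounds the left
  side by \<open>2 (y - x) / ln x\<close>, and this is at most \<open>(y - x) ln ln x\<close> as soon as
  \<open>ln x \<ge> 2\<close> and \<open>ln ln x \<ge> 1\<close>, i.e. for \<open>x \<ge> e\<^sup>e \<approx> 15.2\<close>.\<close>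

lemma ln_diff_le_diff_div:
  fixes x y :: real
  assumes "0 < x" and "0 < y"
  shows "ln y - ln x \<le> (y - x) / x"
proof -
  have "ln (y / x) \<le> y / x - 1"
    using assms by (intro ln_le_minus_one) simp
  then show ?thesis
    using assms by (simp add: ln_div diff_divide_distrib)
qed

lemma ln_ln_diff_le:
  fixes x y :: real
  assumes "1 < x" and "x \<le> y"
  shows "ln (ln y) - ln (ln x) \<le> (y - x) / (x * ln x)"
proof -
  have ln_x_pos: "0 < ln x" and "ln x \<le> ln y"
    using assms by auto
  then have "ln (ln y) - ln (ln x) \<le> (ln y - ln x) / ln x"
    by (intro ln_diff_le_diff_div) auto
  also have "\<dots> \<le> ((y - x) / x) / ln x"
    using assms ln_x_pos by (intro divide_right_mono ln_diff_le_diff_div) auto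
  finally show ?thesis
    by simp
qed

lemma exp_exp_one_le: "exp (exp 1) \<le> (27::real)"
proof -
  have "exp (exp 1) \<le> exp (3::real)"
    using exp_le by simp
  also have "\<dots> = exp 1 ^ 3"
    by (simp add: exp_of_nat_mult[symmetric])
  also have "\<dots> \<le> 3 ^ 3"
    by (rule power_mono[OF exp_le]) simp
  finally show ?thesis
    by simp
qed

lemma weighted_ln_ln_le:
  fixes x y :: real
  assumes "exp (exp 1) \<le> x" and "x \<le> y"
  shows "x / (x + y) * ln (ln y) \<le> 1 / 2 * ln (ln x)"
proof -
  have x_gt_1: "1 < x"
    using assms(1) one_less_exp_iff[of "exp 1"] by (simp del: one_less_exp_iff)
  have ln_x_ge_e: "exp 1 \<le> ln x"
    using assms(1) x_gt_1 by (simp add: ln_ge_iff)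
  have ln_x_ge_2: "2 \<le> ln x"
    using ln_x_ge_e exp_ge_add_one_self[of 1] by linarith
  have ln_ln_x_ge_1: "1 \<le> ln (ln x)"
    using ln_x_ge_e ln_x_ge_2 by (simp add: ln_ge_iff)
  have "x * (ln (ln y) - ln (ln x)) \<le> x * ((y - x) / (x * ln x))"
    using ln_ln_diff_le[OF x_gt_1 assms(2)] x_gt_1 by (intro mult_left_mono) auto
  also have "\<dots> = (y - x) / ln x"
    using x_gt_1 by simp
  also have "\<dots> \<le> (y - x) / 2"
    using assms(2) ln_x_ge_2 by (intro divide_left_mono) auto
  also have "\<dots> \<le> (y - x) * ln (ln x) / 2"
    using assms(2) ln_ln_x_ge_1 by (intro divide_right_mono mult_le_cancel_left1[THEN iffD2]) auto
  finally have "2 * x * ln (ln y) \<le> (x + y) * ln (ln x)"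
    by (simp add: algebra_simps)
  then show ?thesis
    using assms(2) x_gt_1 by (simp add: field_simps)
qed

theorem lemma1:
  fixes n1 n2 :: int
  assumes "34 \<le> n1" and "n1 \<le> n2"
  shows "real_of_int n1 / real_of_int (n1 + n2) * ln (ln (real_of_int n2))
           \<le> 1 / 2 * ln (ln (real_of_int n1))"
proof -
  have "exp (exp 1) \<le> real_of_int n1"
    using exp_exp_one_le assms(1) by linarith
  then show ?thesis
    using weighted_ln_ln_le[of "real_of_int n1" "real_of_int n2"] assms(2) by simp
qed

end
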